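(* Let $s(\cdot)\in\mathcal{P}(\mathbb{R})$ with $s(x)=s_0>2$ for all $x\in[0,1]$. Then the kernel $K(x,y)=K_1(x-y)K_2(y)$ does not belong to $H_{s(\cdot),1}$.
   Context: Here $n=1$. Fix $\beta>0$; $K_1(t)=\chi_{[2,3]}(t)$ and $K_2(t)=t^{-1/2}\big[\log(e/t)\big]^{-\frac{1+\beta}{2}}\chi_{(0,1)}(t)$. Cubes are intervals $Q$; $mQ$ is the concentric interval of length $m\ell(Q)$. $\mathcal{P}(\mathbb{R})$: measurable $p(\cdot):\mathbb{R}\to[1,\infty]$; $\|f\|_{p(\cdot)}=\inf\{\lambda>0:\int_{\{p<\infty\}}|f/\lambda|^{p(x)}dx+\|(f/\lambda)\chi_{\{p=\infty\}}\|_\infty\le1\}$. $K\in H_{s(\cdot),1}$ means $\sup_Q\sup_{x,z\in\frac12Q}\sum_{m\ge1}2^m\ell(Q)\frac{\|[K(x,\cdot)-K(z,\cdot)]\chi_{2^mQ\setminus2^{m-1}Q}\|_{s(\cdot)}}{\|\chi_{2^mQ}\|_{s(\cdot)}}<\infty$ (in particular all terms must be finite). *)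

theory Defs
  imports "HOL-Probability.Essential_Supremum"
begin

definition var_exp :: "(real \<Rightarrow> ereal) \<Rightarrow> bool" where
  "var_exp p \<longleftrightarrow> p \<in> borel_measurable lebesgue \<and> (\<forall>x. 1 \<le> p x)"

definition modular :: "(real \<Rightarrow> ereal) \<Rightarrow> (real \<Rightarrow> real) \<Rightarrow> ereal" where
  "modular p f =
     enn2ereal (\<integral>\<^sup>+ x. indicator {y. p y < \<infinity>} x * ennreal (\<bar>f x\<bar> powr real_of_ereal (p x)) \<partial>lebesgue)
     + esssup lebesgue (\<lambda>x. ereal (\<bar>f x\<bar> * indicator {y. p y = \<infinity>} x))"

text \<open>Luxemburg norm (value infinity if no admissible lambda exists).\<close>
definition vnorm :: "(real \<Rightarrow> ereal) \<Rightarrow> (real \<Rightarrow> real) \<Rightarrow> ereal" where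
  "vnorm p f = Inf (ereal ` {t::real. 0 < t \<and> modular p (\<lambda>x. f x / t) \<le> 1})"

definition ival :: "real \<Rightarrow> real \<Rightarrow> real set" where
  "ival c r = {c - r/2 .. c + r/2}"

definition H_s1 :: "(real \<Rightarrow> ereal) \<Rightarrow> (real \<Rightarrow> real \<Rightarrow> real) \<Rightarrow> bool" where
  "H_s1 s K \<longleftrightarrow> (\<exists>C::real. \<forall>c l x z. 0 < l \<longrightarrow> x \<in> ival c (l/2) \<longrightarrow> z \<in> ival c (l/2) \<longrightarrow>
     (\<Sum>m. ereal (2 ^ Suc m * l)
           * vnorm s (\<lambda>y. (K x y - K z y) * indicator (ival c (2 ^ Suc m * l) - ival c (2 ^ m * l)) y)
           / vnorm s (indicator (ival c (2 ^ Suc m * l)))) \<le> ereal C)"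

definition K1 :: "real \<Rightarrow> real" where
  "K1 t = indicator {2..3} t"

definition K2 :: "real \<Rightarrow> real \<Rightarrow> real" where
  "K2 \<beta> t = (if 0 < t \<and> t < 1 then t powr (-1/2) * (ln (exp 1 / t)) powr (-(1 + \<beta>)/2) else 0)"

end

theory Submission
  imports Defs "HOL-Real_Asymp.Real_Asymp"
begin

text \<open>Take Q = [1/2, 9/2], x = 5/2 and z = 3/2. On (0, 1/2), where s = s0, the difference
  K(x, y) - K(z, y) is just K2(y), and K2(y) powr s0 is about y powr (-s0/2) up to a logarithmic
  factor, hence at least 1/y near 0 because s0 > 2. So the modular of this difference divided by t
  diverges for every t > 0 and its Luxemburg norm on the first annulus 2Q - Q is infinite, while
  the norm of the indicator of 2Q is finite: the first term of the series is already infinite.\<close>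

lemma nn_integral_inverse_at_0_eq_infinity:
  fixes \<delta> c :: real
  assumes "0 < \<delta>" and "0 < c"
  shows "(\<integral>\<^sup>+ y. indicator {0<..<\<delta>} y * ennreal (c / y) \<partial>lebesgue) = \<infinity>"
    (is "?I = _")
proof -
  have "of_nat n \<le> ?I" for n
  proof -
    define d where "d = \<delta> / 2"
    define e where "e = d * exp (- real n / c)"
    have "0 < d" "0 < e" "e \<le> d" "d < \<delta>"
      using assms by (auto simp: d_def e_def)
    have ln_deriv: "((\<lambda>y. c * ln y) has_vector_derivative c / y) (at y within {e..d})"
      if "y \<in> {e..d}" for y
      using that \<open>0 < e\<close>
      by (auto intro!: derivative_eq_intros simp flip: has_real_derivative_iff_has_vector_derivative)
    have "c * ln d - c * ln e = real n"
      using assms \<open>0 < d\<close> unfolding e_def by (simp add: ln_mult algebra_simps)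
    then have "((\<lambda>y. c / y) has_integral real n) {e..d}"
      using fundamental_theorem_of_calculus[OF \<open>e \<le> d\<close> ln_deriv] by simp
    then have "(\<integral>\<^sup>+ y. ennreal (c / y) * indicator {e..d} y \<partial>lborel) = of_nat n"
      using \<open>0 < e\<close> assms
      by (subst nn_integral_has_integral_lebesgue') (auto simp: ennreal_of_nat_eq_real_of_nat)
    moreover have "(\<integral>\<^sup>+ y. ennreal (c / y) * indicator {e..d} y \<partial>lebesgue) \<le> ?I"
      using \<open>0 < e\<close> \<open>d < \<delta>\<close> by (intro nn_integral_mono) (auto simp: indicator_def)
    ultimately show ?thesis
      by (simp add: nn_integral_completion)
  qed
  then show ?thesis
    by (metis ennreal_Ex_less_of_nat infinity_ennreal_def leD top.not_eq_extremum)
qed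

lemma eventually_inverse_le_K2_powr:
  fixes \<beta> s0 :: real
  assumes "2 < s0"
  shows "\<forall>\<^sub>F y in at_right 0. 1 / y \<le> K2 \<beta> y powr s0"
proof -
  have "\<forall>\<^sub>F y in at_right 0. 1 / y \<le> (y powr (-1/2) * ln (exp 1 / y) powr (-(1 + \<beta>)/2)) powr s0"
    using assms by real_asymp
  moreover have "\<forall>\<^sub>F y in at_right 0. y \<in> {0<..<1::real}"
    by (rule eventually_at_right_real) simp
  ultimately show ?thesis
    by eventually_elim (simp add: K2_def)
qed

lemma K2_nonneg: "0 \<le> K2 \<beta> y"
  by (simp add: K2_def)

lemma vnorm_nonneg: "0 \<le> vnorm p f"
  unfolding vnorm_def by (rule Inf_greatest) auto

lemma vnorm_eq_infinity:
  assumes "\<And>t. 0 < t \<Longrightarrow>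
    (\<integral>\<^sup>+ x. indicator {y. p y < \<infinity>} x * ennreal (\<bar>f x / t\<bar> powr real_of_ereal (p x)) \<partial>lebesgue) = \<infinity>"
  shows "vnorm p f = \<infinity>"
proof -
  have "{t. 0 < t \<and> modular p (\<lambda>x. f x / t) \<le> 1} = {}"
    using assms by (auto simp: modular_def)
  then show ?thesis
    unfolding vnorm_def by (simp only:) (simp add: top_ereal_def[symmetric])
qed

lemma vnorm_eq_infinity_if_powr_ge_inverse:
  fixes p :: "real \<Rightarrow> ereal" and f :: "real \<Rightarrow> real" and q \<delta> :: real
  assumes "0 < \<delta>" and minorant: "\<And>y. y \<in> {0<..<\<delta>} \<Longrightarrow> p y = ereal q \<and> 1 / y \<le> \<bar>f y\<bar> powr q"
  shows "vnorm p f = \<infinity>"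
proof (rule vnorm_eq_infinity)
  fix t :: real
  assume "0 < t"
  have "(\<integral>\<^sup>+ y. indicator {0<..<\<delta>} y * ennreal ((1 / t powr q) / y) \<partial>lebesgue)
      \<le> (\<integral>\<^sup>+ x. indicator {y. p y < \<infinity>} x * ennreal (\<bar>f x / t\<bar> powr real_of_ereal (p x)) \<partial>lebesgue)"
  proof (intro nn_integral_mono)
    fix y :: real
    show "indicator {0<..<\<delta>} y * ennreal ((1 / t powr q) / y)
        \<le> indicator {y. p y < \<infinity>} y * ennreal (\<bar>f y / t\<bar> powr real_of_ereal (p y))"
    proof (cases "y \<in> {0<..<\<delta>}")
      case True
      have "(1 / t powr q) / y = (1 / y) / t powr q"
        by simp
      also have "\<dots> \<le> \<bar>f y\<bar> powr q / t powr q"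
        using minorant[OF True] by (intro divide_right_mono) auto
      also have "\<dots> = \<bar>f y / t\<bar> powr q"
        using \<open>0 < t\<close> by (simp add: powr_divide)
      finally show ?thesis
        using True minorant[OF True] by (simp add: ennreal_leI)
    qed simp
  qed
  moreover have "(\<integral>\<^sup>+ y. indicator {0<..<\<delta>} y * ennreal ((1 / t powr q) / y) \<partial>lebesgue) = \<infinity>"
    using \<open>0 < \<delta>\<close> \<open>0 < t\<close> by (intro nn_integral_inverse_at_0_eq_infinity) auto
  ultimately show "(\<integral>\<^sup>+ x. indicator {y. p y < \<infinity>} x * ennreal (\<bar>f x / t\<bar> powr real_of_ereal (p x)) \<partial>lebesgue) = \<infinity>"
    by (simp add: top_unique)
qed

lemma vnorm_indicator_le:
  assumes "var_exp p" and A: "A \<in> sets lebesgue" "emeasure lebesgue A < \<infinity>"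
  shows "vnorm p (indicator A) \<le> ereal (measure lebesgue A + 1)"
proof -
  define t where "t = measure lebesgue A + 1"
  have "1 \<le> t"
    by (simp add: t_def)
  have p_measurable: "p \<in> borel_measurable lebesgue" and p_ge_1: "\<And>x. 1 \<le> p x"
    using \<open>var_exp p\<close> by (auto simp: var_exp_def)
  have "(\<integral>\<^sup>+ x. indicator {y. p y < \<infinity>} x * ennreal (\<bar>indicator A x / t\<bar> powr real_of_ereal (p x)) \<partial>lebesgue)
      \<le> (\<integral>\<^sup>+ x. ennreal (1 / t) * indicator A x \<partial>lebesgue)"
  proof (intro nn_integral_mono)
    fix x :: real
    show "indicator {y. p y < \<infinity>} x * ennreal (\<bar>indicator A x / t\<bar> powr real_of_ereal (p x))
        \<le> ennreal (1 / t) * indicator A x"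
    proof (cases "x \<in> A \<and> p x < \<infinity>")
      case True
      then obtain r where "p x = ereal r"
        using p_ge_1[of x] by (cases "p x") auto
      with p_ge_1[of x] have "(1 / t) powr r \<le> 1 / t"
        using \<open>1 \<le> t\<close> by (intro powr_le_one_le) auto
      with True \<open>p x = ereal r\<close> \<open>1 \<le> t\<close> show ?thesis
        by (simp add: indicator_def ennreal_leI)
    qed (auto simp: indicator_def)
  qed
  also have "\<dots> = ennreal (1 / t) * ennreal (measure lebesgue A)"
    using A by (simp add: nn_integral_cmult_indicator emeasure_eq_ennreal_measure)
  also have "\<dots> = ennreal (measure lebesgue A / t)"
    using \<open>1 \<le> t\<close> by (simp flip: ennreal_mult)
  finally have integral_part: "enn2ereal (\<integral>\<^sup>+ x. indicator {y. p y < \<infinity>} x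
      * ennreal (\<bar>indicator A x / t\<bar> powr real_of_ereal (p x)) \<partial>lebesgue) \<le> ereal (measure lebesgue A / t)"
    using \<open>1 \<le> t\<close> by (simp add: less_eq_ennreal.rep_eq)
  have "{y. p y = \<infinity>} \<in> sets lebesgue"
    using measurable_sets[OF p_measurable, of "{\<infinity>}"] by (simp add: vimage_def)
  then have sup_part: "esssup lebesgue (\<lambda>x. ereal (\<bar>indicator A x / t\<bar> * indicator {y. p y = \<infinity>} x))
      \<le> ereal (1 / t)"
    using A \<open>1 \<le> t\<close>
    by (intro esssup_I borel_measurable_ereal borel_measurable_times borel_measurable_abs
        borel_measurable_divide borel_measurable_indicator borel_measurable_const)
      (auto simp: indicator_def)
  have "modular p (\<lambda>x. indicator A x / t) \<le> ereal (measure lebesgue A / t) + ereal (1 / t)"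
    unfolding modular_def by (rule add_mono[OF integral_part sup_part])
  also have "\<dots> = 1"
    using \<open>1 \<le> t\<close> by (simp flip: add_divide_distrib t_def)
  finally show ?thesis
    using \<open>1 \<le> t\<close> unfolding vnorm_def t_def[symmetric] by (intro Inf_lower2[of "ereal t"]) auto
qed

lemma H_s1_first_annulus_vnorm_finite:
  assumes "H_s1 s K" and "var_exp s" and "0 < l" and "x \<in> ival c (l/2)" and "z \<in> ival c (l/2)"
  shows "vnorm s (\<lambda>y. (K x y - K z y) * indicator (ival c (2 * l) - ival c l) y) \<noteq> \<infinity>"
proof
  assume infinite: "vnorm s (\<lambda>y. (K x y - K z y) * indicator (ival c (2 * l) - ival c l) y) = \<infinity>"
  define F where "F m = ereal (2 ^ Suc m * l)
    * vnorm s (\<lambda>y. (K x y - K z y) * indicator (ival c (2 ^ Suc m * l) - ival c (2 ^ m * l)) y)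
    / vnorm s (indicator (ival c (2 ^ Suc m * l)))" for m
  obtain C where "(\<Sum>m. F m) \<le> ereal C"
    using assms unfolding H_s1_def F_def by blast
  moreover have "F 0 \<le> (\<Sum>m. F m)"
    using suminf_upper[of F 1] \<open>0 < l\<close> by (simp add: F_def vnorm_nonneg)
  moreover have "F 0 = \<infinity>"
  proof -
    have "0 \<le> vnorm s (indicator (ival c (2 * l)))"
      by (rule vnorm_nonneg)
    moreover have "vnorm s (indicator (ival c (2 * l))) \<le> ereal (measure lebesgue (ival c (2 * l)) + 1)"
      using \<open>var_exp s\<close> \<open>0 < l\<close> by (intro vnorm_indicator_le) (auto simp: ival_def)
    ultimately obtain r where "vnorm s (indicator (ival c (2 * l))) = ereal r" "0 \<le> r"
      by (cases "vnorm s (indicator (ival c (2 * l)))") auto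
    then show ?thesis
      using infinite \<open>0 < l\<close> by (cases "r = 0") (auto simp: F_def divide_ereal_def)
  qed
  ultimately show False
    by simp
qed

theorem mainTheorem18:
  fixes \<beta> s0 :: real and s :: "real \<Rightarrow> ereal"
  assumes "0 < \<beta>" and "var_exp s" and "s0 > 2" and "\<forall>x\<in>{0..1}. s x = ereal s0"
  shows "\<not> H_s1 s (\<lambda>x y. K1 (x - y) * K2 \<beta> y)"
proof
  define f where "f y = (K1 (5/2 - y) * K2 \<beta> y - K1 (3/2 - y) * K2 \<beta> y)
    * indicator (ival (5/2) (2 * 4) - ival (5/2) 4) y" for y
  assume "H_s1 s (\<lambda>x y. K1 (x - y) * K2 \<beta> y)"
  then have "vnorm s f \<noteq> \<infinity>"
    unfolding f_def using \<open>var_exp s\<close>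
    by (rule H_s1_first_annulus_vnorm_finite) (auto simp: ival_def)
  obtain b where "0 < b" and b: "\<And>y. 0 < y \<Longrightarrow> y < b \<Longrightarrow> 1 / y \<le> K2 \<beta> y powr s0"
    using eventually_inverse_le_K2_powr[OF \<open>s0 > 2\<close>, of \<beta>] by (auto simp: eventually_at_right_field)
  have "vnorm s f = \<infinity>"
  proof (rule vnorm_eq_infinity_if_powr_ge_inverse)
    show "0 < min b (1/2)"
      using \<open>0 < b\<close> by simp
    fix y assume y: "y \<in> {0<..<min b (1/2)}"
    then have "f y = K2 \<beta> y"
      by (auto simp: f_def K1_def ival_def indicator_def)
    with y b[of y] assms(4) show "s y = ereal s0 \<and> 1 / y \<le> \<bar>f y\<bar> powr s0"
      by (simp add: K2_nonneg)
  qed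
  with \<open>vnorm s f \<noteq> \<infinity>\<close> show False
    by simp
qed

end
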